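(* Let $\mathcal{C}$ be a $k$-linear category with exponential algebraic growth. Then there exist an object $L$ of $\mathcal{C}$ and a finite set $\Sigma$ of morphisms of $\mathcal{C}$ such that $\limsup_n\frac1n\log\dim_k W_\Sigma(n;L)>0$.
   Context: For a $k$-linear category $\mathcal{C}$, finite set $\Sigma$ of morphisms and $n\ge1$, $W_\Sigma(n)\subset\bigoplus_{K,L}\hom(K,L)$ is the $k$-span of all composable words $a_1\cdots a_l$ with $a_i\in\Sigma$, $l\le n$, and $W_\Sigma(n;L)\subset\hom(L,L)$ is the span of those such words which are endomorphisms of $L$. $\mathcal{C}$ has exponential algebraic growth if $\limsup_n\frac1n\log\dim_k W_\Sigma(n)>0$ for some finite $\Sigma$. *)

theory Defs
  imports Complex_Main "HOL-Library.Liminf_Limsup" "HOL-Library.Extended_Real"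
begin

text \<open>The direct sum of all hom spaces
  is realised as an internal direct sum of subspaces hom K L of a k-vector space
  of type 'm (scalar multiplication scale).  Composition cmp g f is the
  composite of f followed by g, for f in hom K L and g in hom L M.\<close>

definition klinear_cat ::
  "('k::field \<Rightarrow> 'm::ab_group_add \<Rightarrow> 'm) \<Rightarrow> ('o \<Rightarrow> 'o \<Rightarrow> 'm set)
   \<Rightarrow> ('m \<Rightarrow> 'm \<Rightarrow> 'm) \<Rightarrow> ('o \<Rightarrow> 'm) \<Rightarrow> bool" where
  "klinear_cat scale hom cmp ident \<longleftrightarrow>
     vector_space scale \<and>
     (\<forall>K L. module.subspace scale (hom K L)) \<and>
     (\<forall>K L. hom K L \<inter> module.span scale (\<Union>{hom K' L' | K' L'. (K', L') \<noteq> (K, L)}) = {0}) \<and>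
     (\<forall>K L M f g. f \<in> hom K L \<longrightarrow> g \<in> hom L M \<longrightarrow> cmp g f \<in> hom K M) \<and>
     (\<forall>K L M f f' g. f \<in> hom K L \<longrightarrow> f' \<in> hom K L \<longrightarrow> g \<in> hom L M \<longrightarrow>
        cmp g (f + f') = cmp g f + cmp g f') \<and>
     (\<forall>K L M f g g'. f \<in> hom K L \<longrightarrow> g \<in> hom L M \<longrightarrow> g' \<in> hom L M \<longrightarrow>
        cmp (g + g') f = cmp g f + cmp g' f) \<and>
     (\<forall>K L M c f g. f \<in> hom K L \<longrightarrow> g \<in> hom L M \<longrightarrow>
        cmp g (scale c f) = scale c (cmp g f) \<and> cmp (scale c g) f = scale c (cmp g f)) \<and>
     (\<forall>K L M N f g h. f \<in> hom K L \<longrightarrow> g \<in> hom L M \<longrightarrow> h \<in> hom M N \<longrightarrow>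
        cmp h (cmp g f) = cmp (cmp h g) f) \<and>
     (\<forall>K. ident K \<in> hom K K) \<and>
     (\<forall>K L f. f \<in> hom K L \<longrightarrow> cmp f (ident K) = f \<and> cmp (ident L) f = f)"

text \<open>A morphism is a triple (source, target, element of hom source target).\<close>

definition is_mor :: "('o \<Rightarrow> 'o \<Rightarrow> 'm set) \<Rightarrow> 'o \<times> 'o \<times> 'm \<Rightarrow> bool" where
  "is_mor hom x \<longleftrightarrow> snd (snd x) \<in> hom (fst x) (fst (snd x))"

text \<open>The word a_1 ... a_l denotes a_1 \<circ> a_2 \<circ> ... \<circ> a_l.\<close>

fun compose :: "('m \<Rightarrow> 'm \<Rightarrow> 'm) \<Rightarrow> ('o \<times> 'o \<times> 'm::zero) list \<Rightarrow> 'm" where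
  "compose cmp [] = 0"
| "compose cmp [x] = snd (snd x)"
| "compose cmp (x # y # xs) = cmp (snd (snd x)) (compose cmp (y # xs))"

definition composable :: "('o \<times> 'o \<times> 'm) list \<Rightarrow> bool" where
  "composable w \<longleftrightarrow> (\<forall>i. Suc i < length w \<longrightarrow> fst (w ! i) = fst (snd (w ! Suc i)))"

definition words :: "('o \<times> 'o \<times> 'm) set \<Rightarrow> nat \<Rightarrow> ('o \<times> 'o \<times> 'm) list set" where
  "words \<Sigma> n = {w. 1 \<le> length w \<and> length w \<le> n \<and> set w \<subseteq> \<Sigma> \<and> composable w}"

definition W :: "('k::field \<Rightarrow> 'm::ab_group_add \<Rightarrow> 'm) \<Rightarrow> ('m \<Rightarrow> 'm \<Rightarrow> 'm)
    \<Rightarrow> ('o \<times> 'o \<times> 'm) set \<Rightarrow> nat \<Rightarrow> 'm set" where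
  "W scale cmp \<Sigma> n = module.span scale (compose cmp ` words \<Sigma> n)"

definition W_end :: "('k::field \<Rightarrow> 'm::ab_group_add \<Rightarrow> 'm) \<Rightarrow> ('m \<Rightarrow> 'm \<Rightarrow> 'm)
    \<Rightarrow> ('o \<times> 'o \<times> 'm) set \<Rightarrow> nat \<Rightarrow> 'o \<Rightarrow> 'm set" where
  "W_end scale cmp \<Sigma> n L = module.span scale
     (compose cmp ` {w \<in> words \<Sigma> n. fst (last w) = L \<and> fst (snd (hd w)) = L})"

definition exp_alg_growth :: "('k::field \<Rightarrow> 'm::ab_group_add \<Rightarrow> 'm) \<Rightarrow> ('o \<Rightarrow> 'o \<Rightarrow> 'm set)
    \<Rightarrow> ('m \<Rightarrow> 'm \<Rightarrow> 'm) \<Rightarrow> bool" where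
  "exp_alg_growth scale hom cmp \<longleftrightarrow>
     (\<exists>\<Sigma>. finite \<Sigma> \<and> (\<forall>x\<in>\<Sigma>. is_mor hom x) \<and>
        limsup (\<lambda>n. ereal (ln (real (vector_space.dim scale (W scale cmp \<Sigma> n))) / real n)) > 0)"

end

theory Submission
  imports Defs
begin

(*
  Fix \<Sigma> and split a word w from s to t at its last letter y with target t: w = u y v, where u is
  empty or a loop at t and v never meets t. So the composites of words from s to t that only visit
  objects in U lie in E \<union> Y \<union> E \<circ> Y, where E are the loops at t and Y the composites y \<circ> v with
  v visiting only U - {t}. Induction on |U| bounds their dimension by ((D + 1)(|\<Sigma>| + 1))^|U|,
  where D = \<Sum>_L dim W_\<Sigma>(n;L), so dim W_\<Sigma>(n) is at most polynomial in D for a fixed \<Sigma>.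
  If every W_\<Sigma>(n;L) grew subexponentially, so would W_\<Sigma>(n).
*)

section \<open>Subexponential sequences\<close>

(* For nonnegative a this says limsup (ln a_n / n) \<le> 0, in a form closed under sums, products
   and powers. *)
definition subexponential :: "(nat \<Rightarrow> real) \<Rightarrow> bool" where
  "subexponential a \<longleftrightarrow> (\<forall>\<epsilon>>0. \<exists>C. \<forall>\<^sub>F n in sequentially. a n \<le> C * exp (\<epsilon> * real n))"

lemma subexponential_const: "subexponential (\<lambda>n. c)"
  unfolding subexponential_def
proof (intro allI impI exI)
  fix \<epsilon> :: real assume "\<epsilon> > 0"
  then have "c \<le> \<bar>c\<bar> * exp (\<epsilon> * real n)" for n
  proof -
    have "1 \<le> exp (\<epsilon> * real n)" using \<open>\<epsilon> > 0\<close> by simp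
    then have "\<bar>c\<bar> * 1 \<le> \<bar>c\<bar> * exp (\<epsilon> * real n)" by (intro mult_left_mono) auto
    then show ?thesis by simp
  qed
  then show "\<forall>\<^sub>F n in sequentially. c \<le> \<bar>c\<bar> * exp (\<epsilon> * real n)" by simp
qed

lemma subexponential_add:
  assumes "subexponential a" "subexponential b"
  shows "subexponential (\<lambda>n. a n + b n)"
  unfolding subexponential_def
proof (intro allI impI)
  fix \<epsilon> :: real assume "\<epsilon> > 0"
  then obtain C D where "\<forall>\<^sub>F n in sequentially. a n \<le> C * exp (\<epsilon> * real n)"
    "\<forall>\<^sub>F n in sequentially. b n \<le> D * exp (\<epsilon> * real n)"
    using assms unfolding subexponential_def by blast
  then have "\<forall>\<^sub>F n in sequentially. a n + b n \<le> (C + D) * exp (\<epsilon> * real n)"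
    by eventually_elim (simp add: distrib_right)
  then show "\<exists>C. \<forall>\<^sub>F n in sequentially. a n + b n \<le> C * exp (\<epsilon> * real n)" ..
qed

lemma subexponential_mult:
  assumes "subexponential a" "subexponential b" "\<And>n. 0 \<le> a n" "\<And>n. 0 \<le> b n"
  shows "subexponential (\<lambda>n. a n * b n)"
  unfolding subexponential_def
proof (intro allI impI)
  fix \<epsilon> :: real assume "\<epsilon> > 0"
  then obtain C D where "\<forall>\<^sub>F n in sequentially. a n \<le> C * exp (\<epsilon> / 2 * real n)"
    "\<forall>\<^sub>F n in sequentially. b n \<le> D * exp (\<epsilon> / 2 * real n)"
    using assms(1,2) unfolding subexponential_def by (meson half_gt_zero)
  then have "\<forall>\<^sub>F n in sequentially. a n * b n \<le> (C * D) * exp (\<epsilon> * real n)"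
  proof eventually_elim
    case (elim n)
    have "a n * b n \<le> (C * exp (\<epsilon> / 2 * real n)) * (D * exp (\<epsilon> / 2 * real n))"
      using elim assms(3,4) by (intro mult_mono) (auto intro: order_trans)
    also have "\<dots> = (C * D) * exp (\<epsilon> * real n)"
      by (simp add: mult_ac flip: exp_add)
    finally show ?case .
  qed
  then show "\<exists>C. \<forall>\<^sub>F n in sequentially. a n * b n \<le> C * exp (\<epsilon> * real n)" ..
qed

lemma subexponential_sum:
  "finite I \<Longrightarrow> (\<And>i. i \<in> I \<Longrightarrow> subexponential (a i)) \<Longrightarrow> subexponential (\<lambda>n. \<Sum>i\<in>I. a i n)"
  by (induction I rule: finite_induct) (auto intro: subexponential_add subexponential_const)

lemma subexponential_power:
  assumes "subexponential a" "\<And>n. 0 \<le> a n"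
  shows "subexponential (\<lambda>n. a n ^ k)"
  by (induction k) (simp_all add: subexponential_mult subexponential_const assms)

lemma subexponential_mono:
  assumes "subexponential b" "\<And>n. a n \<le> b n"
  shows "subexponential a"
  unfolding subexponential_def
proof (intro allI impI)
  fix \<epsilon> :: real assume "\<epsilon> > 0"
  then obtain C where "\<forall>\<^sub>F n in sequentially. b n \<le> C * exp (\<epsilon> * real n)"
    using assms(1) unfolding subexponential_def by blast
  then have "\<forall>\<^sub>F n in sequentially. a n \<le> C * exp (\<epsilon> * real n)"
    by eventually_elim (rule order_trans[OF assms(2)])
  then show "\<exists>C. \<forall>\<^sub>F n in sequentially. a n \<le> C * exp (\<epsilon> * real n)" ..
qed

lemma subexponential_if_limsup_le_0:
  assumes "limsup (\<lambda>n. ereal (ln (a n) / real n)) \<le> 0"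
  shows "subexponential a"
  unfolding subexponential_def
proof (intro allI impI exI)
  fix \<epsilon> :: real assume "\<epsilon> > 0"
  with assms have "\<forall>\<^sub>F n in sequentially. ereal (ln (a n) / real n) < ereal \<epsilon>"
    by (intro Limsup_lessD) (simp add: le_less_trans)
  then show "\<forall>\<^sub>F n in sequentially. a n \<le> 1 * exp (\<epsilon> * real n)"
    using eventually_gt_at_top[of 0]
  proof eventually_elim
    case (elim n)
    show ?case
    proof (cases "a n > 0")
      case True
      with elim have "ln (a n) < \<epsilon> * real n" by (simp add: divide_less_eq mult.commute)
      with True show ?thesis by (metis exp_less_mono exp_ln less_imp_le mult_1)
    qed (simp add: order_trans[of _ 0])
  qed
qed

lemma limsup_le_0_if_subexponential:
  assumes "subexponential a" "\<And>n. 0 \<le> a n"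
  shows "limsup (\<lambda>n. ereal (ln (a n) / real n)) \<le> 0"
proof (rule ereal_le_epsilon2)
  fix e :: real assume "e > 0"
  then obtain C where C: "\<forall>\<^sub>F n in sequentially. a n \<le> C * exp (e / 2 * real n)"
    using assms(1) unfolding subexponential_def by (meson half_gt_zero)
  have "(\<lambda>n. ln C / real n) \<longlonglongrightarrow> 0" by (rule lim_const_over_n)
  with \<open>e > 0\<close> have "\<forall>\<^sub>F n in sequentially. ln C / real n < e / 2"
    by (intro order_tendstoD(2)) auto
  with C have "\<forall>\<^sub>F n in sequentially. ereal (ln (a n) / real n) \<le> 0 + ereal e"
    using eventually_gt_at_top[of 0]
  proof eventually_elim
    case (elim n)
    show ?case
    proof (cases "a n = 0")
      case False
      with assms(2) have "0 < a n" by (simp add: less_le)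
      with elim(1) have "0 < C * exp (e / 2 * real n)" by linarith
      then have "0 < C" by (simp add: zero_less_mult_iff)
      have "ln (a n) \<le> ln (C * exp (e / 2 * real n))"
        using elim(1) \<open>0 < a n\<close> by simp
      also have "\<dots> = ln C + e / 2 * real n" using \<open>0 < C\<close> by (simp add: ln_mult)
      finally have "ln (a n) / real n \<le> ln C / real n + e / 2"
        using elim(3) by (simp add: divide_le_eq distrib_right)
      with elim(2) have "ln (a n) / real n \<le> e" by linarith
      then show ?thesis by simp
    qed (use \<open>e > 0\<close> in simp)
  qed
  then show "limsup (\<lambda>n. ereal (ln (a n) / real n)) \<le> 0 + ereal e"
    by (rule Limsup_bounded)
qed

section \<open>Words\<close>

abbreviation src :: "'o \<times> 'o \<times> 'm \<Rightarrow> 'o" where "src x \<equiv> fst x"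
abbreviation tgt :: "'o \<times> 'o \<times> 'm \<Rightarrow> 'o" where "tgt x \<equiv> fst (snd x)"
abbreviation arr :: "'o \<times> 'o \<times> 'm \<Rightarrow> 'm" where "arr x \<equiv> snd (snd x)"

lemma composable_Nil [simp]: "composable []"
  by (simp add: composable_def)

lemma composable_Cons:
  "composable (x # w) \<longleftrightarrow> composable w \<and> (w \<noteq> [] \<longrightarrow> src x = tgt (hd w))"
  unfolding composable_def by (cases w) (auto simp: nth_Cons split: nat.splits)

lemma composable_append:
  "composable (u @ v) \<longleftrightarrow> composable u \<and> composable v \<and>
     (u \<noteq> [] \<longrightarrow> v \<noteq> [] \<longrightarrow> src (last u) = tgt (hd v))"
  by (induction u) (auto simp: composable_Cons)

lemma compose_Cons: "w \<noteq> [] \<Longrightarrow> compose cmp (x # w) = cmp (arr x) (compose cmp w)"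
  by (cases w) auto

lemma composable_src_mem:
  "composable w \<Longrightarrow> x \<in> set w \<Longrightarrow> src x = src (last w) \<or> src x \<in> tgt ` set w"
  by (induction w) (auto simp: composable_Cons)

lemma finite_words: "finite \<Sigma> \<Longrightarrow> finite (words \<Sigma> n)"
  by (rule finite_subset[OF _ finite_lists_length_le[of \<Sigma> n]]) (auto simp: words_def)

definition paths :: "('o \<times> 'o \<times> 'm) set \<Rightarrow> nat \<Rightarrow> 'o set \<Rightarrow> 'o \<Rightarrow> 'o \<Rightarrow> ('o \<times> 'o \<times> 'm) list set" where
  "paths \<Sigma> n U s t =
     {w \<in> words \<Sigma> n. src (last w) = s \<and> tgt (hd w) = t \<and> (\<forall>x\<in>set w. src x \<in> U \<and> tgt x \<in> U)}"

lemma paths_subset_words: "paths \<Sigma> n U s t \<subseteq> words \<Sigma> n"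
  by (auto simp: paths_def)

lemma paths_empty_if_notin:
  assumes "t \<notin> U"
  shows "paths \<Sigma> n U s t = {}"
proof -
  have False if "w \<in> paths \<Sigma> n U s t" for w
  proof -
    from that have "w \<noteq> []" "tgt (hd w) = t" "\<forall>x\<in>set w. tgt x \<in> U"
      by (auto simp: paths_def words_def)
    with assms show False by (metis hd_in_set)
  qed
  then show ?thesis by blast
qed

lemma paths_mono: "U \<subseteq> V \<Longrightarrow> paths \<Sigma> n U s t \<subseteq> paths \<Sigma> n V s t"
  by (auto simp: paths_def)

lemma paths_append_suffix:
  "u @ v \<in> paths \<Sigma> n U s t \<Longrightarrow> v \<noteq> [] \<Longrightarrow> v \<in> paths \<Sigma> n U s (tgt (hd v))"
  by (auto simp: paths_def words_def composable_append Suc_le_eq)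

lemma paths_append_prefix:
  "u @ v \<in> paths \<Sigma> n U s t \<Longrightarrow> u \<noteq> [] \<Longrightarrow> v \<noteq> [] \<Longrightarrow> u \<in> paths \<Sigma> n U (tgt (hd v)) t"
  by (auto simp: paths_def words_def composable_append Suc_le_eq)

section \<open>Dimension of finite sets of vectors\<close>

context vector_space
begin

lemma dim_le_card_finite: "finite X \<Longrightarrow> dim X \<le> card X"
  using dim_le_card span_superset by blast

lemma dim_le_dim_if_subset_span:
  assumes "finite Y" "X \<subseteq> span Y"
  shows "dim X \<le> dim Y"
proof -
  obtain B where B: "B \<subseteq> Y" "independent B" "Y \<subseteq> span B" "card B = dim Y"
    by (rule basis_exists)
  have "span Y \<subseteq> span B"
    using B(3) by (rule span_minimal[OF _ subspace_span])
  with assms(2) have "dim X \<le> card B"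
    using finite_subset[OF B(1) assms(1)] by (intro dim_le_card) auto
  with B(4) show ?thesis by simp
qed

lemma dim_le_dim_if_subset: "finite Y \<Longrightarrow> X \<subseteq> Y \<Longrightarrow> dim X \<le> dim Y"
  using span_superset by (intro dim_le_dim_if_subset_span) auto

lemma dim_Un_le:
  assumes "finite A" "finite B"
  shows "dim (A \<union> B) \<le> dim A + dim B"
proof -
  obtain BA where BA: "BA \<subseteq> A" "independent BA" "A \<subseteq> span BA" "card BA = dim A"
    by (rule basis_exists)
  obtain BB where BB: "BB \<subseteq> B" "independent BB" "B \<subseteq> span BB" "card BB = dim B"
    by (rule basis_exists)
  have "A \<union> B \<subseteq> span (BA \<union> BB)"
    using BA(3) BB(3) span_mono[of BA "BA \<union> BB"] span_mono[of BB "BA \<union> BB"] by blast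
  then have "dim (A \<union> B) \<le> card (BA \<union> BB)"
    using finite_subset[OF BA(1) assms(1)] finite_subset[OF BB(1) assms(2)]
    by (intro dim_le_card) auto
  also have "\<dots> \<le> card BA + card BB" by (rule card_Un_le)
  finally show ?thesis using BA(4) BB(4) by simp
qed

lemma dim_UN_le:
  "finite I \<Longrightarrow> (\<And>i. i \<in> I \<Longrightarrow> finite (A i)) \<Longrightarrow> dim (\<Union>i\<in>I. A i) \<le> (\<Sum>i\<in>I. dim (A i))"
proof (induction I rule: finite_induct)
  case empty
  show ?case using dim_le_card_finite[of "{}"] by simp
next
  case (insert i I)
  then have "dim (\<Union>j\<in>insert i I. A j) \<le> dim (A i) + dim (\<Union>j\<in>I. A j)"
    by (simp add: dim_Un_le)
  with insert show ?case by simp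
qed

lemma image_span_subset_span_image:
  assumes "subspace V" "B \<subseteq> V"
    and add: "\<And>x y. x \<in> V \<Longrightarrow> y \<in> V \<Longrightarrow> \<phi> (x + y) = \<phi> x + \<phi> y"
    and scale: "\<And>c x. x \<in> V \<Longrightarrow> \<phi> (scale c x) = scale c (\<phi> x)"
  shows "\<phi> ` span B \<subseteq> span (\<phi> ` B)"
proof -
  have "\<phi> 0 = 0"
    using scale[of 0 0] subspace_0[OF assms(1)] by simp
  have "subspace {x \<in> V. \<phi> x \<in> span (\<phi> ` B)}"
    using assms(1) \<open>\<phi> 0 = 0\<close>
    by (auto simp: subspace_def add scale span_zero span_add span_scale)
  then have "span B \<subseteq> {x \<in> V. \<phi> x \<in> span (\<phi> ` B)}"
    using assms(2) by (intro span_minimal) (auto intro: span_base)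
  then show ?thesis by blast
qed

end

section \<open>Words in a k-linear category\<close>

locale klinear_semicategory = vector_space scale
  for scale :: "'k::field \<Rightarrow> 'm::ab_group_add \<Rightarrow> 'm" +
  fixes hom :: "'o \<Rightarrow> 'o \<Rightarrow> 'm set"
    and cmp :: "'m \<Rightarrow> 'm \<Rightarrow> 'm"
  assumes subspace_hom: "subspace (hom K L)"
    and cmp_in_hom: "f \<in> hom K L \<Longrightarrow> g \<in> hom L M \<Longrightarrow> cmp g f \<in> hom K M"
    and cmp_add_right:
      "f \<in> hom K L \<Longrightarrow> f' \<in> hom K L \<Longrightarrow> g \<in> hom L M \<Longrightarrow> cmp g (f + f') = cmp g f + cmp g f'"
    and cmp_add_left:
      "f \<in> hom K L \<Longrightarrow> g \<in> hom L M \<Longrightarrow> g' \<in> hom L M \<Longrightarrow> cmp (g + g') f = cmp g f + cmp g' f"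
    and cmp_scale_right: "f \<in> hom K L \<Longrightarrow> g \<in> hom L M \<Longrightarrow> cmp g (scale c f) = scale c (cmp g f)"
    and cmp_scale_left: "f \<in> hom K L \<Longrightarrow> g \<in> hom L M \<Longrightarrow> cmp (scale c g) f = scale c (cmp g f)"
    and cmp_assoc:
      "f \<in> hom K L \<Longrightarrow> g \<in> hom L M \<Longrightarrow> h \<in> hom M N \<Longrightarrow> cmp h (cmp g f) = cmp (cmp h g) f"

lemma klinear_semicategory_if_klinear_cat:
  "klinear_cat scale hom cmp ident \<Longrightarrow> klinear_semicategory scale hom cmp"
  unfolding klinear_cat_def klinear_semicategory_def klinear_semicategory_axioms_def
  by (elim conjE) (intro conjI allI impI; simp)

context klinear_semicategory
begin

lemma cmp_mem_span_cmp_image: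
  assumes A: "A \<subseteq> hom L M" and B: "B \<subseteq> hom K L" and "a \<in> span A" "b \<in> span B"
  shows "cmp a b \<in> span ((\<lambda>(g, f). cmp g f) ` (A \<times> B))"
proof -
  let ?P = "span ((\<lambda>(g, f). cmp g f) ` (A \<times> B))"
  have a: "a \<in> hom L M"
    using span_minimal[OF A subspace_hom] \<open>a \<in> span A\<close> by blast
  have "cmp a f \<in> ?P" if f: "f \<in> B" for f
  proof -
    have "(\<lambda>g. cmp g f) ` span A \<subseteq> span ((\<lambda>g. cmp g f) ` A)"
      using f B A by (intro image_span_subset_span_image[OF subspace_hom])
        (auto simp: cmp_add_left cmp_scale_left)
    also have "\<dots> \<subseteq> ?P"
      using f by (intro span_mono) auto
    finally show ?thesis using \<open>a \<in> span A\<close> by blast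
  qed
  then have "cmp a ` B \<subseteq> ?P" by blast
  moreover have "cmp a ` span B \<subseteq> span (cmp a ` B)"
    using a B by (intro image_span_subset_span_image[OF subspace_hom])
      (auto simp: cmp_add_right cmp_scale_right)
  ultimately show ?thesis
    using \<open>b \<in> span B\<close> span_minimal[OF _ subspace_span] by blast
qed

lemma dim_cmp_image_le:
  assumes "A \<subseteq> hom L M" "B \<subseteq> hom K L" "finite A" "finite B"
  shows "dim ((\<lambda>(g, f). cmp g f) ` (A \<times> B)) \<le> dim A * dim B"
proof -
  obtain BA where BA: "BA \<subseteq> A" "independent BA" "A \<subseteq> span BA" "card BA = dim A"
    by (rule basis_exists)
  obtain BB where BB: "BB \<subseteq> B" "independent BB" "B \<subseteq> span BB" "card BB = dim B"
    by (rule basis_exists)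
  have fin: "finite BA" "finite BB"
    using BA(1) BB(1) assms(3,4) finite_subset by auto
  have "(\<lambda>(g, f). cmp g f) ` (A \<times> B) \<subseteq> span ((\<lambda>(g, f). cmp g f) ` (BA \<times> BB))"
  proof clarify
    fix g f assume "g \<in> A" "f \<in> B"
    then show "cmp g f \<in> span ((\<lambda>(g, f). cmp g f) ` (BA \<times> BB))"
      using BA(1,3) BB(1,3) assms(1,2) by (intro cmp_mem_span_cmp_image) auto
  qed
  then have "dim ((\<lambda>(g, f). cmp g f) ` (A \<times> B)) \<le> card ((\<lambda>(g, f). cmp g f) ` (BA \<times> BB))"
    using fin by (intro dim_le_card) auto
  also have "\<dots> \<le> card (BA \<times> BB)"
    using fin by (intro card_image_le) auto
  finally show ?thesis
    using BA(4) BB(4) by (simp add: card_cartesian_product)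
qed

lemma compose_in_hom:
  "w \<noteq> [] \<Longrightarrow> composable w \<Longrightarrow> \<forall>x\<in>set w. is_mor hom x \<Longrightarrow>
   compose cmp w \<in> hom (src (last w)) (tgt (hd w))"
proof (induction w)
  case (Cons x w)
  show ?case
  proof (cases "w = []")
    case False
    with Cons have "compose cmp w \<in> hom (src (last w)) (tgt (hd w))" "src x = tgt (hd w)"
      by (simp_all add: composable_Cons)
    moreover have "arr x \<in> hom (src x) (tgt x)"
      using Cons.prems(3) by (simp add: is_mor_def)
    ultimately show ?thesis
      using False by (simp add: compose_Cons cmp_in_hom)
  qed (use Cons.prems in \<open>simp add: is_mor_def\<close>)
qed simp

lemma compose_append:
  "u \<noteq> [] \<Longrightarrow> v \<noteq> [] \<Longrightarrow> composable (u @ v) \<Longrightarrow> \<forall>x\<in>set (u @ v). is_mor hom x \<Longrightarrow>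
   compose cmp (u @ v) = cmp (compose cmp u) (compose cmp v)"
proof (induction u)
  case (Cons x u)
  show ?case
  proof (cases "u = []")
    case True
    with Cons.prems show ?thesis by (simp add: compose_Cons)
  next
    case False
    have comp: "composable u" "composable v" "src (last u) = tgt (hd v)" "src x = tgt (hd u)"
      using Cons.prems False by (auto simp: composable_Cons composable_append)
    have homs: "compose cmp v \<in> hom (src (last v)) (tgt (hd v))"
      "compose cmp u \<in> hom (src (last u)) (tgt (hd u))"
      using Cons.prems False comp(1,2) by (intro compose_in_hom; simp)+
    have arr_x: "arr x \<in> hom (src x) (tgt x)"
      using Cons.prems(4) by (simp add: is_mor_def)
    have "compose cmp ((x # u) @ v) = cmp (arr x) (cmp (compose cmp u) (compose cmp v))"
      using Cons False comp by (simp add: compose_Cons composable_append)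
    also have "\<dots> = cmp (cmp (arr x) (compose cmp u)) (compose cmp v)"
      by (rule cmp_assoc[OF homs(1) homs(2)[unfolded comp(3)] arr_x[unfolded comp(4)]])
    also have "\<dots> = cmp (compose cmp (x # u)) (compose cmp v)"
      using False by (simp add: compose_Cons)
    finally show ?thesis .
  qed
qed simp

definition loops :: "('o \<times> 'o \<times> 'm) set \<Rightarrow> nat \<Rightarrow> 'o \<Rightarrow> 'm set" where
  "loops \<Sigma> n L = compose cmp ` paths \<Sigma> n UNIV L L"

definition first_arrivals :: "('o \<times> 'o \<times> 'm) set \<Rightarrow> nat \<Rightarrow> 'o set \<Rightarrow> 'o \<Rightarrow> 'o \<Rightarrow> 'm set" where
  "first_arrivals \<Sigma> n U s t =
     arr ` {y \<in> \<Sigma>. src y = s \<and> tgt y = t} \<union>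
     (\<Union>y\<in>{y \<in> \<Sigma>. tgt y = t}. cmp (arr y) ` compose cmp ` paths \<Sigma> n (U - {t}) s (src y))"

lemma finite_compose_paths: "finite \<Sigma> \<Longrightarrow> finite (compose cmp ` paths \<Sigma> n U s t)"
  by (intro finite_imageI finite_subset[OF paths_subset_words finite_words])

lemma finite_first_arrivals: "finite \<Sigma> \<Longrightarrow> finite (first_arrivals \<Sigma> n U s t)"
  unfolding first_arrivals_def by (simp add: finite_compose_paths)

lemma compose_paths_subset_hom:
  assumes "\<forall>x\<in>\<Sigma>. is_mor hom x"
  shows "compose cmp ` paths \<Sigma> n U s t \<subseteq> hom s t"
proof (rule image_subsetI)
  fix w assume "w \<in> paths \<Sigma> n U s t"
  with assms have "w \<noteq> []" "composable w" "\<forall>x\<in>set w. is_mor hom x"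
    "src (last w) = s" "tgt (hd w) = t"
    by (auto simp: paths_def words_def)
  then show "compose cmp w \<in> hom s t"
    using compose_in_hom[of w] by simp
qed

lemma first_arrivals_subset_hom:
  assumes "\<forall>x\<in>\<Sigma>. is_mor hom x"
  shows "first_arrivals \<Sigma> n U s t \<subseteq> hom s t"
proof -
  have "cmp (arr y) f \<in> hom s t"
    if "y \<in> \<Sigma>" "tgt y = t" "f \<in> compose cmp ` paths \<Sigma> n (U - {t}) s (src y)" for y f
  proof (rule cmp_in_hom)
    show "f \<in> hom s (src y)"
      using that(3) compose_paths_subset_hom[OF assms] by blast
    show "arr y \<in> hom (src y) t"
      using that(1,2) assms by (auto simp: is_mor_def)
  qed
  then show ?thesis
    using assms unfolding first_arrivals_def by (auto simp: is_mor_def)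
qed

lemma compose_mem_first_arrivals:
  assumes path: "y # v \<in> paths \<Sigma> n U s t" and avoid: "\<forall>x\<in>set v. tgt x \<noteq> t" and "s \<noteq> t"
  shows "compose cmp (y # v) \<in> first_arrivals \<Sigma> n U s t"
proof -
  from path have "y \<in> \<Sigma>" "tgt y = t"
    by (auto simp: paths_def words_def)
  show ?thesis
  proof (cases "v = []")
    case True
    with path have "src y = s"
      by (simp add: paths_def)
    with True \<open>y \<in> \<Sigma>\<close> \<open>tgt y = t\<close> show ?thesis
      unfolding first_arrivals_def by auto
  next
    case False
    with path have "src y = tgt (hd v)"
      by (simp add: paths_def words_def composable_Cons)
    moreover have "v \<in> paths \<Sigma> n U s (tgt (hd v))"
      using paths_append_suffix[of "[y]" v] path False by simp
    ultimately have v: "v \<in> paths \<Sigma> n U s (src y)"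
      by simp
    have "src x \<noteq> t" if "x \<in> set v" for x
      using composable_src_mem[of v x] that v avoid \<open>s \<noteq> t\<close> by (auto simp: paths_def words_def)
    with v avoid have "v \<in> paths \<Sigma> n (U - {t}) s (src y)"
      by (auto simp: paths_def)
    with \<open>y \<in> \<Sigma>\<close> \<open>tgt y = t\<close> show ?thesis
      unfolding first_arrivals_def compose_Cons[OF False] by blast
  qed
qed

lemma compose_path_decomposition:
  assumes mor: "\<forall>x\<in>\<Sigma>. is_mor hom x" and path: "w \<in> paths \<Sigma> n U s t"
  shows "compose cmp w \<in> loops \<Sigma> n t \<union> first_arrivals \<Sigma> n U s t \<union>
           (\<lambda>(g, f). cmp g f) ` (loops \<Sigma> n t \<times> first_arrivals \<Sigma> n U s t)"
proof (cases "s = t")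
  case True
  with path paths_mono[of U UNIV] show ?thesis
    unfolding loops_def by blast
next
  case False
  from path have "w \<noteq> []" "tgt (hd w) = t"
    by (auto simp: paths_def words_def)
  then obtain u y v where split: "w = u @ y # v" and y: "tgt y = t" and avoid: "\<forall>x\<in>set v. tgt x \<noteq> t"
    using split_list_last_prop[of w "\<lambda>x. tgt x = t"] hd_in_set by blast
  with path have "y # v \<in> paths \<Sigma> n U s t"
    using paths_append_suffix[of u "y # v"] by simp
  then have arrival: "compose cmp (y # v) \<in> first_arrivals \<Sigma> n U s t"
    using avoid False by (rule compose_mem_first_arrivals)
  show ?thesis
  proof (cases "u = []")
    case True
    with split arrival show ?thesis by simp
  next
    case False
    with path split y have "u \<in> paths \<Sigma> n U t t"
      using paths_append_prefix[of u "y # v"] by simp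
    then have "compose cmp u \<in> loops \<Sigma> n t"
      using paths_mono[of U UNIV] unfolding loops_def by blast
    moreover have "compose cmp w = cmp (compose cmp u) (compose cmp (y # v))"
      using path False mor unfolding split
      by (intro compose_append) (auto simp: paths_def words_def)
    ultimately show ?thesis
      using arrival by (auto intro!: image_eqI[where x = "(compose cmp u, compose cmp (y # v))"])
  qed
qed

lemma dim_first_arrivals_le:
  assumes fin: "finite \<Sigma>" and mor: "\<forall>x\<in>\<Sigma>. is_mor hom x"
    and G: "\<And>s'. dim (compose cmp ` paths \<Sigma> n (U - {t}) s s') \<le> G"
  shows "dim (first_arrivals \<Sigma> n U s t) \<le> card \<Sigma> * (G + 1)"
proof -
  define direct where "direct = arr ` {y \<in> \<Sigma>. src y = s \<and> tgt y = t}"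
  define through where "through y = cmp (arr y) ` compose cmp ` paths \<Sigma> n (U - {t}) s (src y)" for y
  define T where "T = {y \<in> \<Sigma>. tgt y = t}"
  have fin_T: "finite T" and fin_direct: "finite direct" and fin_through: "\<And>y. finite (through y)"
    using fin by (simp_all add: T_def direct_def through_def finite_compose_paths)
  have "dim direct \<le> card direct"
    using fin_direct by (rule dim_le_card_finite)
  also have "\<dots> \<le> card \<Sigma>"
    unfolding direct_def using fin by (intro card_image_le[THEN order_trans] card_mono) auto
  finally have dim_direct: "dim direct \<le> card \<Sigma>" .
  have dim_through: "dim (through y) \<le> G" if "y \<in> T" for y
  proof -
    let ?P = "compose cmp ` paths \<Sigma> n (U - {t}) s (src y)"
    have through_eq: "through y = (\<lambda>(g, f). cmp g f) ` ({arr y} \<times> ?P)"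
      unfolding through_def by auto
    have "{arr y} \<subseteq> hom (src y) t"
      using that mor by (auto simp: T_def is_mor_def)
    then have "dim (through y) \<le> dim {arr y} * dim ?P"
      unfolding through_eq
      by (rule dim_cmp_image_le[OF _ compose_paths_subset_hom[OF mor]]) (simp_all add: fin finite_compose_paths)
    also have "\<dots> \<le> 1 * G"
      using dim_le_card_finite[of "{arr y}"] G by (intro mult_mono) auto
    finally show ?thesis by simp
  qed
  have "dim (first_arrivals \<Sigma> n U s t) \<le> dim direct + dim (\<Union>y\<in>T. through y)"
    unfolding first_arrivals_def direct_def[symmetric] through_def[symmetric] T_def[symmetric]
    using fin_direct fin_T fin_through by (intro dim_Un_le) auto
  also have "\<dots> \<le> card \<Sigma> + (\<Sum>y\<in>T. dim (through y))"
    using dim_direct dim_UN_le[OF fin_T fin_through] by (intro add_mono)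
  also have "(\<Sum>y\<in>T. dim (through y)) \<le> card T * G"
    using dim_through sum_bounded_above[of T "\<lambda>y. dim (through y)" G] by simp
  also have "card T * G \<le> card \<Sigma> * G"
    using fin by (intro mult_right_mono card_mono) (auto simp: T_def)
  finally show ?thesis by simp
qed

lemma dim_compose_paths_less:
  assumes fin: "finite \<Sigma>" and mor: "\<forall>x\<in>\<Sigma>. is_mor hom x"
    and "finite U" and "\<And>q. q \<in> U \<Longrightarrow> dim (loops \<Sigma> n q) \<le> D"
  shows "dim (compose cmp ` paths \<Sigma> n U s t) < ((D + 1) * (card \<Sigma> + 1)) ^ card U"
  using assms(3,4)
proof (induction "card U" arbitrary: U s t)
  case 0
  then have "paths \<Sigma> n U s t = {}"
    by (simp add: paths_empty_if_notin)
  then show ?case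
    using dim_le_card_finite[of "{}"] by simp
next
  case (Suc k)
  define B where "B = (D + 1) * (card \<Sigma> + 1)"
  show ?case
  proof (cases "t \<in> U")
    case False
    then show ?thesis
      using dim_le_card_finite[of "{}"] by (simp add: paths_empty_if_notin)
  next
    case True
    let ?E = "loops \<Sigma> n t" and ?Y = "first_arrivals \<Sigma> n U s t"
    have "k = card (U - {t})" "finite (U - {t})"
      using Suc.hyps(2) Suc.prems(1) True by auto
    moreover have "dim (loops \<Sigma> n q) \<le> D" if "q \<in> U - {t}" for q
      using Suc.prems(2) that by blast
    ultimately have IH: "dim (compose cmp ` paths \<Sigma> n (U - {t}) s s') < B ^ k" for s'
      using Suc.hyps(1) unfolding B_def by metis
    have "dim (compose cmp ` paths \<Sigma> n (U - {t}) s s') \<le> B ^ k - 1" for s'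
      using IH[of s'] by linarith
    then have "dim ?Y \<le> card \<Sigma> * (B ^ k - 1 + 1)"
      by (rule dim_first_arrivals_le[OF fin mor])
    also have "\<dots> = card \<Sigma> * B ^ k"
      unfolding B_def by simp
    finally have dim_Y: "dim ?Y \<le> card \<Sigma> * B ^ k" .
    have fin_EY: "finite ?E" "finite ?Y" "finite ((\<lambda>(g, f). cmp g f) ` (?E \<times> ?Y))"
      using fin by (simp_all add: loops_def finite_compose_paths finite_first_arrivals)
    have "compose cmp ` paths \<Sigma> n U s t \<subseteq> ?E \<union> ?Y \<union> (\<lambda>(g, f). cmp g f) ` (?E \<times> ?Y)"
      using compose_path_decomposition[OF mor] by blast
    then have "dim (compose cmp ` paths \<Sigma> n U s t) \<le> dim (?E \<union> ?Y \<union> (\<lambda>(g, f). cmp g f) ` (?E \<times> ?Y))"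
      using fin_EY by (intro dim_le_dim_if_subset) auto
    also have "\<dots> \<le> dim (?E \<union> ?Y) + dim ((\<lambda>(g, f). cmp g f) ` (?E \<times> ?Y))"
      using fin_EY by (intro dim_Un_le) auto
    also have "\<dots> \<le> dim ?E + dim ?Y + dim ?E * dim ?Y"
      using fin_EY by (intro add_mono dim_Un_le
          dim_cmp_image_le[OF compose_paths_subset_hom[OF mor, of n UNIV t t, folded loops_def]
            first_arrivals_subset_hom[OF mor]])
    also have "\<dots> < (D + 1) * (dim ?Y + 1)"
    proof -
      have "dim ?E * dim ?Y \<le> D * dim ?Y"
        using Suc.prems(2)[OF True] by (rule mult_right_mono) simp
      moreover have "(D + 1) * (dim ?Y + 1) = D * dim ?Y + D + dim ?Y + 1"
        by (simp add: algebra_simps)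
      ultimately show ?thesis
        using Suc.prems(2)[OF True] by linarith
    qed
    also have "\<dots> \<le> (D + 1) * ((card \<Sigma> + 1) * B ^ k)"
    proof -
      have "1 \<le> B ^ k"
        by (simp add: B_def)
      moreover have "(card \<Sigma> + 1) * B ^ k = card \<Sigma> * B ^ k + B ^ k"
        by simp
      ultimately have "dim ?Y + 1 \<le> (card \<Sigma> + 1) * B ^ k"
        using dim_Y by linarith
      then show ?thesis
        by (rule mult_left_mono) simp
    qed
    also have "\<dots> = B ^ Suc k"
      unfolding B_def power_Suc by (rule mult.assoc[symmetric])
    also have "\<dots> = B ^ card U"
      unfolding Suc.hyps(2) ..
    finally show ?thesis
      unfolding B_def .
  qed
qed

lemma dim_W_le:
  assumes fin: "finite \<Sigma>" and mor: "\<forall>x\<in>\<Sigma>. is_mor hom x"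
    and Ob: "Ob = src ` \<Sigma> \<union> tgt ` \<Sigma>"
  shows "dim (W scale cmp \<Sigma> n)
    \<le> card Ob ^ 2 * (((\<Sum>q\<in>Ob. dim (loops \<Sigma> n q)) + 1) * (card \<Sigma> + 1)) ^ card Ob"
proof -
  define D where "D = (\<Sum>q\<in>Ob. dim (loops \<Sigma> n q))"
  define P where "P s t = compose cmp ` paths \<Sigma> n Ob s t" for s t
  have fin_Ob: "finite Ob"
    using fin Ob by simp
  have fin_P: "finite (P s t)" for s t
    using fin by (simp add: P_def finite_compose_paths)
  have dim_loops: "dim (loops \<Sigma> n q) \<le> D" if "q \<in> Ob" for q
    unfolding D_def using fin_Ob that by (intro member_le_sum) auto
  have "compose cmp ` words \<Sigma> n \<subseteq> (\<Union>s\<in>Ob. \<Union>t\<in>Ob. P s t)"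
  proof (rule image_subsetI)
    fix w assume w: "w \<in> words \<Sigma> n"
    then have "w \<noteq> []" "set w \<subseteq> \<Sigma>"
      unfolding words_def by auto
    then have "last w \<in> \<Sigma>" "hd w \<in> \<Sigma>"
      by auto
    with \<open>set w \<subseteq> \<Sigma>\<close> have "src (last w) \<in> Ob" "tgt (hd w) \<in> Ob"
      "\<forall>x\<in>set w. src x \<in> Ob \<and> tgt x \<in> Ob"
      using Ob by auto
    with w have "w \<in> paths \<Sigma> n Ob (src (last w)) (tgt (hd w))"
      unfolding paths_def by blast
    with \<open>src (last w) \<in> Ob\<close> \<open>tgt (hd w) \<in> Ob\<close>
    show "compose cmp w \<in> (\<Union>s\<in>Ob. \<Union>t\<in>Ob. P s t)"
      unfolding P_def by blast
  qed
  then have "dim (W scale cmp \<Sigma> n) \<le> dim (\<Union>s\<in>Ob. \<Union>t\<in>Ob. P s t)"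
    unfolding W_def dim_span using fin_Ob fin_P by (intro dim_le_dim_if_subset) auto
  also have "\<dots> \<le> (\<Sum>s\<in>Ob. dim (\<Union>t\<in>Ob. P s t))"
    using fin_Ob fin_P by (intro dim_UN_le) auto
  also have "\<dots> \<le> (\<Sum>s\<in>Ob. \<Sum>t\<in>Ob. dim (P s t))"
    using fin_Ob fin_P by (intro sum_mono dim_UN_le) auto
  also have "\<dots> \<le> (\<Sum>s\<in>Ob. \<Sum>t\<in>Ob. ((D + 1) * (card \<Sigma> + 1)) ^ card Ob)"
    unfolding P_def using dim_compose_paths_less[OF fin mor fin_Ob dim_loops]
    by (intro sum_mono less_imp_le)
  also have "\<dots> = card Ob ^ 2 * ((D + 1) * (card \<Sigma> + 1)) ^ card Ob"
    by (simp add: power2_eq_square)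
  finally show ?thesis
    unfolding D_def .
qed

lemma exists_loops_growth:
  assumes fin: "finite \<Sigma>" and mor: "\<forall>x\<in>\<Sigma>. is_mor hom x"
    and growth: "limsup (\<lambda>n. ereal (ln (real (dim (W scale cmp \<Sigma> n))) / real n)) > 0"
  shows "\<exists>L. limsup (\<lambda>n. ereal (ln (real (dim (W_end scale cmp \<Sigma> n L))) / real n)) > 0"
proof (rule ccontr)
  define Ob where "Ob = src ` \<Sigma> \<union> tgt ` \<Sigma>"
  define D where "D n = (\<Sum>q\<in>Ob. dim (loops \<Sigma> n q))" for n
  assume "\<not> ?thesis"
  moreover have "dim (W_end scale cmp \<Sigma> n L) = dim (loops \<Sigma> n L)" for n L
    unfolding W_end_def loops_def paths_def by simp
  ultimately have "limsup (\<lambda>n. ereal (ln (real (dim (loops \<Sigma> n L))) / real n)) \<le> 0" for L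
    by (simp add: not_less)
  then have "subexponential (\<lambda>n. real (dim (loops \<Sigma> n L)))" for L
    by (rule subexponential_if_limsup_le_0)
  then have "subexponential (\<lambda>n. real (D n))"
    unfolding D_def of_nat_sum using fin by (intro subexponential_sum) (simp_all add: Ob_def)
  then have "subexponential (\<lambda>n. (real (D n) + 1) * real (card \<Sigma> + 1))"
    by (intro subexponential_mult subexponential_add subexponential_const) simp_all
  then have "subexponential (\<lambda>n. ((real (D n) + 1) * real (card \<Sigma> + 1)) ^ card Ob)"
    by (rule subexponential_power) simp
  then have "subexponential (\<lambda>n. real (card Ob ^ 2) * ((real (D n) + 1) * real (card \<Sigma> + 1)) ^ card Ob)"
    by (intro subexponential_mult subexponential_const) simp_all
  moreover have "real (dim (W scale cmp \<Sigma> n))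
      \<le> real (card Ob ^ 2) * ((real (D n) + 1) * real (card \<Sigma> + 1)) ^ card Ob" for n
  proof -
    have "real (dim (W scale cmp \<Sigma> n)) \<le> real (card Ob ^ 2 * ((D n + 1) * (card \<Sigma> + 1)) ^ card Ob)"
      using dim_W_le[OF fin mor Ob_def, of n] unfolding D_def by (simp only: of_nat_le_iff)
    then show ?thesis
      by (simp only: of_nat_mult of_nat_power of_nat_add of_nat_1)
  qed
  ultimately have "subexponential (\<lambda>n. real (dim (W scale cmp \<Sigma> n)))"
    by (rule subexponential_mono)
  then have "limsup (\<lambda>n. ereal (ln (real (dim (W scale cmp \<Sigma> n))) / real n)) \<le> 0"
    by (rule limsup_le_0_if_subexponential) simp
  with growth show False by simp
qed

end

theorem mainTheorem14:
  fixes scale :: "'k::field \<Rightarrow> 'm::ab_group_add \<Rightarrow> 'm"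
    and hom :: "'o \<Rightarrow> 'o \<Rightarrow> 'm set"
    and cmp :: "'m \<Rightarrow> 'm \<Rightarrow> 'm"
    and ident :: "'o \<Rightarrow> 'm"
  assumes "klinear_cat scale hom cmp ident"
    and "exp_alg_growth scale hom cmp"
  shows "\<exists>L \<Sigma>. finite \<Sigma> \<and> (\<forall>x\<in>\<Sigma>. is_mor hom x) \<and>
    limsup (\<lambda>n. ereal (ln (real (vector_space.dim scale (W_end scale cmp \<Sigma> n L))) / real n)) > 0"
proof -
  interpret klinear_semicategory scale hom cmp
    using assms(1) by (rule klinear_semicategory_if_klinear_cat)
  obtain \<Sigma> where \<Sigma>: "finite \<Sigma>" "\<forall>x\<in>\<Sigma>. is_mor hom x"
    and growth: "limsup (\<lambda>n. ereal (ln (real (dim (W scale cmp \<Sigma> n))) / real n)) > 0"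
    using assms(2) unfolding exp_alg_growth_def by blast
  obtain L where "limsup (\<lambda>n. ereal (ln (real (dim (W_end scale cmp \<Sigma> n L))) / real n)) > 0"
    using exists_loops_growth[OF \<Sigma> growth] ..
  with \<Sigma> show ?thesis
    by blast
qed

end
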